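(* For the population protocol USD and every $t\ge1$: (1) $\mathbb E_{t-1}[\gamma_t]=\gamma_{t-1}+\frac2n\big((1-2\beta_{t-1})\gamma_{t-1}+\|\alpha_{t-1}\|_3^3\big)+\frac{\beta_{t-1}-\gamma_{t-1}}{n^2}$. (2) $\mathrm{Var}_{t-1}[\gamma_t]\le\frac{9\|\alpha_{t-1}\|_3^3}{n^2}$. (3) Conditioned on $\mathcal F_{t-1}$, $\gamma_t-\mathbb E_{t-1}[\gamma_t]$ satisfies the $\big(\frac{8\alpha^{\max}_{t-1}}{n},\frac{9\|\alpha_{t-1}\|_3^3}{n^2}\big)$-Bernstein condition.
   Context: Vertex set $V$, $|V|=n$; opinions in $\Sigma=[k]\cup\{\bot\}$ ($\bot$ = undecided). USD update rule: $\mathsf{update}(\sigma_1,\sigma_2)=\bot$ if $\sigma_1,\sigma_2\in[k]$ and $\sigma_1\ne\sigma_2$; $=\sigma_2$ if $\sigma_1=\bot$; $=\sigma_1$ otherwise. Population protocol USD: given $\mathrm{opn}_t\in\Sigma^V$, an ordered pair $(u,v)$ is chosen uniformly from $V\times V$ (with replacement), $\mathrm{opn}_{t+1}(u)=\mathsf{update}(\mathrm{opn}_t(u),\mathrm{opn}_t(v))$, and all other vertices keep their opinions. Notation: $\alpha_t(i)=|\{u:\mathrm{opn}_t(u)=i\}|/n$, $\beta_t=\sum_{i\in[k]}\alpha_t(i)$, $\gamma_t=\sum_{i\in[k]}\alpha_t(i)^2$, $\|\alpha_t\|_3^3=\sum_{i\in[k]}\alpha_t(i)^3$, $\alpha^{\max}_t=\max_{i\in[k]}\alpha_t(i)$.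 $(\mathcal F_t)$ is the natural filtration; $\mathbb E_{t-1},\mathrm{Var}_{t-1}$ are conditional on $\mathcal F_{t-1}$. Bernstein condition: for $D,s\ge0$, $X$ satisfies the $(D,s)$-Bernstein condition if $\mathbb E[e^{\lambda X}]\le\exp\!\big(\frac{\lambda^2 s/2}{1-|\lambda|D/3}\big)$ for all real $\lambda$ with $|\lambda|D<3$. Conditioned on $\mathcal F_{t-1}$: the same with $\mathbb E_{t-1}$, almost surely. *)

theory Defs
  imports "HOL-Probability.Probability"
begin

text \<open>Opinions: \<open>Some i\<close> with \<open>i \<in> {1..k}\<close> is opinion i, \<open>None\<close> is undecided (bot).\<close>

definition usd_update :: "nat option \<Rightarrow> nat option \<Rightarrow> nat option" where
  "usd_update s1 s2 =
     (if s1 \<noteq> None \<and> s2 \<noteq> None \<and> s1 \<noteq> s2 then None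
      else if s1 = None then s2 else s1)"

definition usd_step :: "('v \<Rightarrow> nat option) \<Rightarrow> 'v \<times> 'v \<Rightarrow> ('v \<Rightarrow> nat option)" where
  "usd_step x p = x(fst p := usd_update (x (fst p)) (x (snd p)))"

text \<open>Distribution of the next configuration given the current one (conditioning on F_{t-1}).\<close>
definition usd_next :: "'v set \<Rightarrow> ('v \<Rightarrow> nat option) \<Rightarrow> ('v \<Rightarrow> nat option) pmf" where
  "usd_next V x = map_pmf (usd_step x) (pmf_of_set (V \<times> V))"

definition valid_config :: "'v set \<Rightarrow> nat \<Rightarrow> ('v \<Rightarrow> nat option) \<Rightarrow> bool" where
  "valid_config V k x \<longleftrightarrow> (\<forall>u\<in>V. x u = None \<or> (\<exists>i\<in>{1..k}. x u = Some i))"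

definition alpha :: "'v set \<Rightarrow> ('v \<Rightarrow> nat option) \<Rightarrow> nat \<Rightarrow> real" where
  "alpha V x i = real (card {u\<in>V. x u = Some i}) / real (card V)"

definition beta :: "'v set \<Rightarrow> nat \<Rightarrow> ('v \<Rightarrow> nat option) \<Rightarrow> real" where
  "beta V k x = (\<Sum>i\<in>{1..k}. alpha V x i)"

definition gamma :: "'v set \<Rightarrow> nat \<Rightarrow> ('v \<Rightarrow> nat option) \<Rightarrow> real" where
  "gamma V k x = (\<Sum>i\<in>{1..k}. (alpha V x i)^2)"

definition norm3_cubed :: "'v set \<Rightarrow> nat \<Rightarrow> ('v \<Rightarrow> nat option) \<Rightarrow> real" where
  "norm3_cubed V k x = (\<Sum>i\<in>{1..k}. (alpha V x i)^3)"

definition alpha_max :: "'v set \<Rightarrow> nat \<Rightarrow> ('v \<Rightarrow> nat option) \<Rightarrow> real" where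
  "alpha_max V k x = Max ((alpha V x) ` {1..k})"

definition bernstein_cond :: "'a measure \<Rightarrow> ('a \<Rightarrow> real) \<Rightarrow> real \<Rightarrow> real \<Rightarrow> bool" where
  "bernstein_cond M X D s \<longleftrightarrow>
     (\<forall>l::real. \<bar>l\<bar> * D < 3 \<longrightarrow>
        (\<integral>\<omega>. exp (l * X \<omega>) \<partial>M) \<le> exp ((l^2 * s / 2) / (1 - \<bar>l\<bar> * D / 3)))"

end

theory Submission
  imports Defs
begin

text \<open>An interaction changes only the opinion of the initiator \<open>u\<close>, and moves a single
  coordinate of \<open>\<alpha>\<close> by \<open>\<plusminus>1/n\<close>, so \<open>\<gamma>\<close> changes by an increment that depends only on the
  opinions of \<open>u\<close> and \<open>v\<close>. Averaging the increment over the \<open>n\<^sup>2\<close> pairs, grouped by opinions,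
  gives the drift. An increment involving opinion \<open>i\<close> is at most \<open>3\<alpha>(i)/n\<close> in absolute value;
  this bounds its second moment by \<open>9\<parallel>\<alpha>\<parallel>\<^sub>3\<^sup>3/n\<^sup>2\<close>, hence the variance, and the deviation of
  \<open>\<gamma>\<^sub>t\<close> from its mean by \<open>6\<alpha>\<^sup>m\<^sup>a\<^sup>x/n\<close> (the theorem only claims \<open>8\<alpha>\<^sup>m\<^sup>a\<^sup>x/n\<close>). Any centred
  variable with bounded range and bounded second moment satisfies the Bernstein condition,
  because \<open>e\<^sup>y \<le> 1 + y + y\<^sup>2/2/(1 - \<bar>y\<bar>/3)\<close> for \<open>\<bar>y\<bar> < 3\<close>.\<close>

lemma two_mult_three_power_le_fact: "2 * 3 ^ n \<le> (fact (n + 2) :: nat)"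
proof (induction n)
  case 0
  then show ?case by simp
next
  case (Suc n)
  have "2 * 3 ^ Suc n = 3 * (2 * 3 ^ n :: nat)" by simp
  also have "\<dots> \<le> 3 * fact (n + 2)" using Suc.IH by simp
  also have "\<dots> \<le> (n + 3) * fact (n + 2)" by (intro mult_le_mono1) simp
  also have "\<dots> = fact (Suc n + 2)" by (simp add: algebra_simps)
  finally show ?case .
qed

text \<open>The Taylor tail of \<open>exp y\<close> beyond the linear term is dominated termwise by the geometric
  series \<open>y\<^sup>2/2 \<cdot> \<Sum> (\<bar>y\<bar>/3)\<^sup>n\<close>.\<close>
lemma exp_le_bernstein_bound:
  fixes y :: real
  assumes "\<bar>y\<bar> < 3"
  shows "exp y \<le> 1 + y + y\<^sup>2 / 2 / (1 - \<bar>y\<bar> / 3)"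
proof -
  define f where "f n = inverse (fact (n + 2)) *\<^sub>R y ^ (n + 2)" for n
  define g where "g n = y\<^sup>2 / 2 * (\<bar>y\<bar> / 3) ^ n" for n
  have g_sums: "g sums (y\<^sup>2 / 2 * (1 / (1 - \<bar>y\<bar> / 3)))"
    unfolding g_def by (rule sums_mult) (rule geometric_sums, use assms in simp)
  have f_le_g: "norm (f n) \<le> g n" for n
  proof -
    have "real (2 * 3 ^ n) \<le> real (fact (n + 2))"
      using two_mult_three_power_le_fact[of n] by (simp only: of_nat_le_iff)
    then have fact_ge: "2 * 3 ^ n \<le> (fact (n + 2) :: real)"
      by (simp only: of_nat_fact) simp
    have "norm (f n) = y\<^sup>2 * \<bar>y\<bar> ^ n / fact (n + 2)"
      unfolding f_def by (simp add: abs_mult power_abs power_add divide_inverse mult_ac power2_eq_square)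
    also have "\<dots> \<le> y\<^sup>2 * \<bar>y\<bar> ^ n / (2 * 3 ^ n)"
      using fact_ge by (intro divide_left_mono) auto
    also have "\<dots> = g n" unfolding g_def by (simp add: power_divide)
    finally show ?thesis .
  qed
  have summable_f: "summable f"
    by (rule summable_comparison_test[OF _ sums_summable[OF g_sums]]) (use f_le_g in auto)
  have "(\<Sum>n. f n) \<le> (\<Sum>n. g n)"
    by (rule suminf_le[OF _ summable_f sums_summable[OF g_sums]])
      (use f_le_g in \<open>auto intro: order_trans[OF abs_ge_self]\<close>)
  also have "\<dots> = y\<^sup>2 / 2 / (1 - \<bar>y\<bar> / 3)" using sums_unique[OF g_sums] by simp
  finally show ?thesis using exp_first_two_terms[of y] unfolding f_def by simp
qed

lemma (in prob_space) bernstein_cond_if_bounded: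
  fixes X :: "'a \<Rightarrow> real"
  assumes X: "X \<in> borel_measurable M" and bounded: "AE \<omega> in M. \<bar>X \<omega>\<bar> \<le> D"
    and mean: "expectation X = 0" and second_moment: "expectation (\<lambda>\<omega>. (X \<omega>)\<^sup>2) \<le> s"
  shows "bernstein_cond M X D s"
  unfolding bernstein_cond_def
proof (intro allI impI)
  fix l :: real
  assume lD: "\<bar>l\<bar> * D < 3"
  define K where "K = l\<^sup>2 / 2 / (1 - \<bar>l\<bar> * D / 3)"
  have "K \<ge> 0" unfolding K_def using lD by (intro divide_nonneg_pos) auto
  have "AE \<omega> in M. \<bar>l * X \<omega>\<bar> \<le> \<bar>l\<bar> * D"
    using bounded by eventually_elim (simp add: abs_mult mult_left_mono)
  then have pointwise: "AE \<omega> in M. exp (l * X \<omega>) \<le> 1 + l * X \<omega> + K * (X \<omega>)\<^sup>2"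
  proof eventually_elim
    case (elim \<omega>)
    then have "exp (l * X \<omega>) \<le> 1 + l * X \<omega> + (l * X \<omega>)\<^sup>2 / 2 / (1 - \<bar>l * X \<omega>\<bar> / 3)"
      using lD by (intro exp_le_bernstein_bound) simp
    also have "(l * X \<omega>)\<^sup>2 / 2 / (1 - \<bar>l * X \<omega>\<bar> / 3) \<le> (l * X \<omega>)\<^sup>2 / 2 / (1 - \<bar>l\<bar> * D / 3)"
      using elim lD by (intro divide_left_mono) auto
    finally show ?case by (simp add: K_def power_mult_distrib)
  qed
  have int_X: "integrable M X"
    using bounded X by (intro integrable_const_bound[of _ D]) auto
  have int_X2: "integrable M (\<lambda>\<omega>. (X \<omega>)\<^sup>2)"
    using bounded X by (intro integrable_const_bound[of _ "D\<^sup>2"])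
      (auto elim!: eventually_mono, metis abs_ge_zero power2_abs power_mono)
  have int_exp: "integrable M (\<lambda>\<omega>. exp (l * X \<omega>))"
    using \<open>AE \<omega> in M. \<bar>l * X \<omega>\<bar> \<le> \<bar>l\<bar> * D\<close> X
    by (intro integrable_const_bound[of _ "exp (\<bar>l\<bar> * D)"]) (auto elim!: eventually_mono)
  have "expectation (\<lambda>\<omega>. exp (l * X \<omega>)) \<le> expectation (\<lambda>\<omega>. 1 + l * X \<omega> + K * (X \<omega>)\<^sup>2)"
    using pointwise int_exp int_X int_X2 by (intro integral_mono_AE) auto
  also have "\<dots> = 1 + K * expectation (\<lambda>\<omega>. (X \<omega>)\<^sup>2)"
    using int_X int_X2 mean by (simp add: prob_space)
  also have "\<dots> \<le> 1 + K * s" using \<open>K \<ge> 0\<close> second_moment by (simp add: mult_left_mono)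
  also have "\<dots> \<le> exp (K * s)" by (rule exp_ge_add_one_self)
  finally show "expectation (\<lambda>\<omega>. exp (l * X \<omega>)) \<le> exp (l\<^sup>2 * s / 2 / (1 - \<bar>l\<bar> * D / 3))"
    by (simp add: K_def)
qed

lemma (in prob_space) variance_le_expectation_sq_diff:
  fixes X :: "'a \<Rightarrow> real"
  assumes "integrable M X" "integrable M (\<lambda>\<omega>. (X \<omega>)\<^sup>2)"
  shows "variance X \<le> expectation (\<lambda>\<omega>. (X \<omega> - c)\<^sup>2)"
proof -
  have "expectation (\<lambda>\<omega>. (X \<omega> - c)\<^sup>2) = variance X + (expectation X - c)\<^sup>2"
    using assms by (simp add: variance_eq power2_diff prob_space algebra_simps power2_eq_square)
  then show ?thesis by simp
qed

lemma (in prob_space) abs_expectation_sub_le: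
  fixes X :: "'a \<Rightarrow> real"
  assumes "integrable M X" "AE \<omega> in M. \<bar>X \<omega> - a\<bar> \<le> c"
  shows "\<bar>expectation X - a\<bar> \<le> c"
proof -
  have "a - c \<le> expectation X"
    using assms by (intro integral_ge_const) (auto elim!: eventually_mono)
  moreover have "expectation X \<le> a + c"
    using assms by (intro integral_le_const) (auto elim!: eventually_mono)
  ultimately show ?thesis by linarith
qed

lemma set_pmf_usd_next:
  assumes "finite V" "V \<noteq> {}"
  shows "set_pmf (usd_next V x) = usd_step x ` (V \<times> V)"
  using assms by (simp add: usd_next_def)

lemma expectation_usd_next:
  assumes "finite V" "V \<noteq> {}"
  shows "measure_pmf.expectation (usd_next V x) f
           = (\<Sum>p\<in>V \<times> V. f (usd_step x p)) / (real (card V))\<^sup>2"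
  using assms unfolding usd_next_def
  by (simp add: integral_pmf_of_set card_cartesian_product power2_eq_square)

lemma usd_step_Pair:
  "usd_step x (u, v) =
     (case x v of
        None \<Rightarrow> x
      | Some j \<Rightarrow>
          (case x u of None \<Rightarrow> x(u := Some j) | Some i \<Rightarrow> if i = j then x else x(u := None)))"
  by (auto simp: usd_step_def usd_update_def split: option.split)

lemma valid_config_Some:
  "valid_config V k x \<Longrightarrow> u \<in> V \<Longrightarrow> x u = Some i \<Longrightarrow> i \<in> {1..k}"
  unfolding valid_config_def by force

lemma alpha_nonneg: "alpha V x i \<ge> 0"
  unfolding alpha_def by simp

lemma alpha_ge_inverse_card:
  assumes "finite V" "u \<in> V" "x u = Some i"
  shows "1 / real (card V) \<le> alpha V x i"
proof -
  have "{w \<in> V. x w = Some i} \<noteq> {}" using assms by auto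
  then have "card {w \<in> V. x w = Some i} \<ge> 1"
    using assms(1) by (simp add: Suc_le_eq card_gt_0_iff)
  then show ?thesis unfolding alpha_def by (simp add: divide_right_mono)
qed

lemma alpha_ge_inverse_card_if_nonzero:
  assumes "finite V" "alpha V x i \<noteq> 0"
  shows "1 / real (card V) \<le> alpha V x i"
proof -
  have "{u \<in> V. x u = Some i} \<noteq> {}"
    using assms(2) unfolding alpha_def by force
  then obtain u where "u \<in> V" "x u = Some i" by blast
  then show ?thesis using alpha_ge_inverse_card[OF assms(1)] by blast
qed

lemma alpha_le_alpha_max: "i \<in> {1..k} \<Longrightarrow> alpha V x i \<le> alpha_max V k x"
  unfolding alpha_max_def by (intro Max_ge) auto

lemma alpha_max_nonneg: "k \<ge> 1 \<Longrightarrow> alpha_max V k x \<ge> 0"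
  using alpha_le_alpha_max[of 1 k V x] alpha_nonneg[of V x 1] by simp

lemma alpha_fun_upd:
  assumes "finite V" "u \<in> V"
  shows "alpha V (x(u := s)) i
           = alpha V x i + (of_bool (s = Some i) - of_bool (x u = Some i)) / real (card V)"
proof -
  define A where "A = {w \<in> V - {u}. x w = Some i}"
  have "finite A" "u \<notin> A" using assms(1) by (auto simp: A_def)
  have "{w \<in> V. (x(u := s)) w = Some i} = (if s = Some i then insert u A else A)"
    "{w \<in> V. x w = Some i} = (if x u = Some i then insert u A else A)"
    using assms(2) by (auto simp: A_def)
  then show ?thesis
    using \<open>finite A\<close> \<open>u \<notin> A\<close> unfolding alpha_def by (simp add: add_divide_distrib)
qed

lemma gamma_shift_single:
  assumes "\<And>l. alpha V y l = alpha V x l + (if l = i then d else 0)" "i \<in> {1..k}"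
  shows "gamma V k y = gamma V k x + 2 * alpha V x i * d + d\<^sup>2"
proof -
  have "gamma V k y =
      (\<Sum>l\<in>{1..k}. (alpha V x l)\<^sup>2 + (if l = i then 2 * alpha V x i * d + d\<^sup>2 else 0))"
    unfolding gamma_def assms(1) by (rule sum.cong) (auto simp: power2_eq_square algebra_simps)
  also have "\<dots> = gamma V k x + 2 * alpha V x i * d + d\<^sup>2"
    using assms(2) by (simp add: gamma_def sum.distrib)
  finally show ?thesis .
qed

text \<open>An undecided vertex adopting \<open>j\<close> raises \<open>\<alpha>(j)\<close> by \<open>1/n\<close>; a vertex of opinion \<open>i\<close> meeting a
  different opinion lowers \<open>\<alpha>(i)\<close> by \<open>1/n\<close>; and \<open>(a \<plusminus> 1/n)\<^sup>2 - a\<^sup>2 = \<plusminus>2a/n + 1/n\<^sup>2\<close>.\<close>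
definition gamma_increment :: "'v set \<Rightarrow> ('v \<Rightarrow> nat option) \<Rightarrow> nat option \<Rightarrow> nat option \<Rightarrow> real" where
  "gamma_increment V x s1 s2 =
     (case s2 of
        None \<Rightarrow> 0
      | Some j \<Rightarrow>
          (case s1 of
             None \<Rightarrow> 2 * alpha V x j / real (card V) + 1 / (real (card V))\<^sup>2
           | Some i \<Rightarrow> if i = j then 0 else 1 / (real (card V))\<^sup>2 - 2 * alpha V x i / real (card V)))"

lemma gamma_usd_step:
  assumes "finite V" "valid_config V k x" "u \<in> V" "v \<in> V"
  shows "gamma V k (usd_step x (u, v)) = gamma V k x + gamma_increment V x (x u) (x v)"
proof (cases "x v")
  case None
  then show ?thesis by (simp add: usd_step_Pair gamma_increment_def)
next
  case (Some j)
  have j: "j \<in> {1..k}" using valid_config_Some[OF assms(2,4) Some] .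
  show ?thesis
  proof (cases "x u")
    case None
    have "alpha V (x(u := Some j)) l = alpha V x l + (if l = j then 1 / real (card V) else 0)" for l
      using alpha_fun_upd[OF assms(1,3)] None by simp
    from gamma_shift_single[OF this j] show ?thesis
      using None Some by (simp add: usd_step_Pair gamma_increment_def power2_eq_square)
  next
    case (Some i)
    have i: "i \<in> {1..k}" using valid_config_Some[OF assms(2,3) Some] .
    have "alpha V (x(u := None)) l = alpha V x l + (if l = i then - (1 / real (card V)) else 0)" for l
      using alpha_fun_upd[OF assms(1,3)] Some by simp
    from gamma_shift_single[OF this i] show ?thesis
      using Some \<open>x v = Some j\<close> by (simp add: usd_step_Pair gamma_increment_def power2_eq_square)
  qed
qed

lemma sum_config_counts:
  fixes \<phi> :: "nat option \<Rightarrow> real"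
  assumes "finite V" "valid_config V k x"
  shows "(\<Sum>u\<in>V. \<phi> (x u)) = real (card {u\<in>V. x u = None}) * \<phi> None
           + (\<Sum>i\<in>{1..k}. real (card {u\<in>V. x u = Some i}) * \<phi> (Some i))"
proof -
  have opinions: "x ` V \<subseteq> insert None (Some ` {1..k})"
    using assms(2) unfolding valid_config_def by auto
  have "(\<Sum>u\<in>V. \<phi> (x u)) = (\<Sum>s\<in>insert None (Some ` {1..k}). \<Sum>u\<in>{u\<in>V. x u = s}. \<phi> (x u))"
    using sum.group[OF assms(1) _ opinions, of "\<lambda>u. \<phi> (x u)"] by simp
  also have "\<dots> = (\<Sum>s\<in>insert None (Some ` {1..k}). real (card {u\<in>V. x u = s}) * \<phi> s)"
    by (rule sum.cong) auto
  also have "\<dots> = real (card {u\<in>V. x u = None}) * \<phi> None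
           + (\<Sum>i\<in>{1..k}. real (card {u\<in>V. x u = Some i}) * \<phi> (Some i))"
    by (subst sum.insert) (auto simp: sum.reindex)
  finally show ?thesis .
qed

lemma sum_config_alpha:
  fixes \<phi> :: "nat option \<Rightarrow> real"
  assumes "finite V" "V \<noteq> {}" "valid_config V k x"
  shows "(\<Sum>u\<in>V. \<phi> (x u)) = real (card V) * ((1 - beta V k x) * \<phi> None
           + (\<Sum>i\<in>{1..k}. alpha V x i * \<phi> (Some i)))"
proof -
  let ?n = "real (card V)" and ?c = "\<lambda>s. real (card {u\<in>V. x u = s})"
  have "?n > 0" using assms by (simp add: card_gt_0_iff)
  have n_eq: "?n = ?c None + (\<Sum>i\<in>{1..k}. ?c (Some i))"
    using sum_config_counts[OF assms(1,3), of "\<lambda>_. 1"] by simp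
  have "?n * beta V k x = (\<Sum>i\<in>{1..k}. ?c (Some i))"
    using \<open>?n > 0\<close> by (simp add: beta_def alpha_def sum_distrib_left)
  then have "?n * (1 - beta V k x) = ?c None"
    using n_eq by (simp add: algebra_simps)
  moreover have "?n * alpha V x i = ?c (Some i)" for i
    using \<open>?n > 0\<close> by (simp add: alpha_def)
  ultimately show ?thesis
    using sum_config_counts[OF assms(1,3)]
    by (simp add: distrib_left sum_distrib_left mult.assoc[symmetric])
qed

lemma beta_le_one:
  assumes "finite V" "V \<noteq> {}" "valid_config V k x"
  shows "beta V k x \<le> 1"
proof -
  have "(0::real) \<le> (\<Sum>u\<in>V. of_bool (x u = None))" by (rule sum_nonneg) simp
  also have "\<dots> = real (card V) * (1 - beta V k x)"
    using sum_config_alpha[OF assms, of "\<lambda>s. of_bool (s = None)"] by simp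
  finally show ?thesis using assms by (simp add: zero_le_mult_iff card_gt_0_iff)
qed

lemma alpha_le_beta: "i \<in> {1..k} \<Longrightarrow> alpha V x i \<le> beta V k x"
  unfolding beta_def using alpha_nonneg by (intro member_le_sum) auto

lemma sum_pairs_opinion_fun:
  fixes F :: "nat option \<Rightarrow> nat option \<Rightarrow> real"
  assumes "finite V" "V \<noteq> {}" "valid_config V k x"
    and "\<And>s. F s None = 0" and "\<And>j. F None (Some j) = g j"
    and "\<And>i j. F (Some i) (Some j) = (if i = j then 0 else h i)"
  shows "(\<Sum>p\<in>V \<times> V. F (x (fst p)) (x (snd p))) = (real (card V))\<^sup>2 *
     ((1 - beta V k x) * (\<Sum>j\<in>{1..k}. alpha V x j * g j)
      + (\<Sum>i\<in>{1..k}. alpha V x i * (beta V k x - alpha V x i) * h i))"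
proof -
  let ?n = "real (card V)" and ?B = "beta V k x" and ?a = "alpha V x"
  define \<psi> where "\<psi> s = (\<Sum>j\<in>{1..k}. ?a j * F s (Some j))" for s
  have inner: "(\<Sum>v\<in>V. F s (x v)) = ?n * \<psi> s" for s
    using sum_config_alpha[OF assms(1-3), of "F s"] assms(4) unfolding \<psi>_def by simp
  have \<psi>_Some: "\<psi> (Some i) = (?B - ?a i) * h i" if "i \<in> {1..k}" for i
  proof -
    have "\<psi> (Some i) = (\<Sum>j\<in>{1..k}. ?a j * h i - (if i = j then ?a j * h i else 0))"
      unfolding \<psi>_def assms(6) by (rule sum.cong) auto
    also have "\<dots> = (?B - ?a i) * h i"
      using that by (simp add: sum_subtractf beta_def sum_distrib_left[symmetric] algebra_simps)
    finally show ?thesis .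
  qed
  have "(\<Sum>p\<in>V \<times> V. F (x (fst p)) (x (snd p))) = (\<Sum>u\<in>V. \<Sum>v\<in>V. F (x u) (x v))"
    by (simp add: sum.cartesian_product case_prod_beta)
  also have "\<dots> = (\<Sum>u\<in>V. ?n * \<psi> (x u))" by (simp add: inner)
  also have "\<dots> = ?n * ?n * ((1 - ?B) * \<psi> None + (\<Sum>i\<in>{1..k}. ?a i * \<psi> (Some i)))"
    using sum_config_alpha[OF assms(1-3), of "\<lambda>s. ?n * \<psi> s"]
    by (simp add: algebra_simps sum_distrib_left)
  also have "\<dots> = ?n\<^sup>2 * ((1 - ?B) * (\<Sum>j\<in>{1..k}. ?a j * g j)
      + (\<Sum>i\<in>{1..k}. ?a i * (?B - ?a i) * h i))"
    using \<psi>_Some by (simp add: \<psi>_def assms(5) power2_eq_square mult.assoc)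
  finally show ?thesis .
qed

lemma mean_gamma_increment:
  assumes "finite V" "V \<noteq> {}" "valid_config V k x"
  shows "(\<Sum>p\<in>V \<times> V. gamma_increment V x (x (fst p)) (x (snd p))) / (real (card V))\<^sup>2 =
           2 / real (card V) * ((1 - 2 * beta V k x) * gamma V k x + norm3_cubed V k x)
           + (beta V k x - gamma V k x) / (real (card V))\<^sup>2"
proof -
  let ?n = "real (card V)" and ?a = "alpha V x" and ?B = "beta V k x" and ?G = "gamma V k x"
    and ?C = "norm3_cubed V k x"
  have "?n > 0" using assms by (simp add: card_gt_0_iff)
  have "(\<Sum>p\<in>V \<times> V. gamma_increment V x (x (fst p)) (x (snd p))) = ?n\<^sup>2 *
      ((1 - ?B) * (\<Sum>j\<in>{1..k}. ?a j * (2 * ?a j / ?n + 1 / ?n\<^sup>2))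
       + (\<Sum>i\<in>{1..k}. ?a i * (?B - ?a i) * (1 / ?n\<^sup>2 - 2 * ?a i / ?n)))"
    by (rule sum_pairs_opinion_fun[OF assms]) (auto simp: gamma_increment_def)
  also have "(\<Sum>j\<in>{1..k}. ?a j * (2 * ?a j / ?n + 1 / ?n\<^sup>2)) = 2 / ?n * ?G + ?B / ?n\<^sup>2"
    unfolding gamma_def beta_def
    by (simp add: sum.distrib sum_distrib_left sum_divide_distrib algebra_simps power2_eq_square)
  also have "(\<Sum>i\<in>{1..k}. ?a i * (?B - ?a i) * (1 / ?n\<^sup>2 - 2 * ?a i / ?n))
      = (\<Sum>i\<in>{1..k}. ?B / ?n\<^sup>2 * ?a i - 1 / ?n\<^sup>2 * (?a i)\<^sup>2 - 2 * ?B / ?n * (?a i)\<^sup>2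
                      + 2 / ?n * (?a i)^3)"
    by (rule sum.cong) (simp_all add: algebra_simps power2_eq_square power3_eq_cube)
  also have "\<dots> = ?B / ?n\<^sup>2 * ?B - 1 / ?n\<^sup>2 * ?G - 2 * ?B / ?n * ?G + 2 / ?n * ?C"
    unfolding gamma_def beta_def norm3_cubed_def
    by (simp add: sum.distrib sum_subtractf sum_distrib_left)
  finally have "(\<Sum>p\<in>V \<times> V. gamma_increment V x (x (fst p)) (x (snd p))) / ?n\<^sup>2
      = (1 - ?B) * (2 / ?n * ?G + ?B / ?n\<^sup>2)
        + (?B / ?n\<^sup>2 * ?B - 1 / ?n\<^sup>2 * ?G - 2 * ?B / ?n * ?G + 2 / ?n * ?C)"
    using \<open>?n > 0\<close> by simp
  also have "\<dots> = 2 / ?n * ((1 - 2 * ?B) * ?G + ?C) + (?B - ?G) / ?n\<^sup>2"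
    using \<open>?n > 0\<close> by (simp add: field_simps power2_eq_square)
  finally show ?thesis .
qed

lemma expectation_gamma_usd_next:
  assumes "finite V" "V \<noteq> {}" "valid_config V k x"
  shows "measure_pmf.expectation (usd_next V x) (gamma V k) =
           gamma V k x
           + 2 / real (card V) * ((1 - 2 * beta V k x) * gamma V k x + norm3_cubed V k x)
           + (beta V k x - gamma V k x) / (real (card V))\<^sup>2"
proof -
  let ?n = "real (card V)" and ?G = "gamma V k x"
  let ?D = "\<lambda>p. gamma_increment V x (x (fst p)) (x (snd p))"
  have "?n > 0" using assms by (simp add: card_gt_0_iff)
  have "measure_pmf.expectation (usd_next V x) (gamma V k) = (\<Sum>p\<in>V \<times> V. ?G + ?D p) / ?n\<^sup>2"
    unfolding expectation_usd_next[OF assms(1,2)]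
    by (intro arg_cong[where f = "\<lambda>s. s / _"] sum.cong) (auto simp: gamma_usd_step[OF assms(1,3)])
  also have "\<dots> = ?G + (\<Sum>p\<in>V \<times> V. ?D p) / ?n\<^sup>2"
    using \<open>?n > 0\<close>
    by (simp add: sum.distrib card_cartesian_product add_divide_distrib power2_eq_square)
  finally show ?thesis unfolding mean_gamma_increment[OF assms] by simp
qed

lemma abs_gamma_jumps_le:
  assumes "finite V" "alpha V x i \<noteq> 0"
  shows "\<bar>2 * alpha V x i / real (card V) + 1 / (real (card V))\<^sup>2\<bar>
           \<le> 3 * alpha V x i / real (card V)"
    and "\<bar>1 / (real (card V))\<^sup>2 - 2 * alpha V x i / real (card V)\<bar>
           \<le> 3 * alpha V x i / real (card V)"
proof -
  let ?n = "real (card V)" and ?a = "alpha V x i"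
  have "card V \<noteq> 0" using assms(2) by (auto simp: alpha_def)
  then have "?n > 0" by simp
  have "1 / ?n \<le> ?a" using alpha_ge_inverse_card_if_nonzero[OF assms] .
  then have "1 / ?n\<^sup>2 \<le> ?a / ?n"
    using divide_right_mono[of "1 / ?n" ?a ?n] \<open>?n > 0\<close> by (simp add: power2_eq_square)
  moreover have "2 * ?a / ?n = 2 * (?a / ?n)" "3 * ?a / ?n = 3 * (?a / ?n)" by simp_all
  moreover have "1 / ?n\<^sup>2 \<ge> 0" by simp
  ultimately show "\<bar>2 * ?a / ?n + 1 / ?n\<^sup>2\<bar> \<le> 3 * ?a / ?n"
    and "\<bar>1 / ?n\<^sup>2 - 2 * ?a / ?n\<bar> \<le> 3 * ?a / ?n"
    by linarith+
qed

lemma abs_gamma_increment_le: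
  assumes "finite V" "valid_config V k x" "u \<in> V" "v \<in> V" "k \<ge> 1"
  shows "\<bar>gamma_increment V x (x u) (x v)\<bar> \<le> 3 * alpha_max V k x / real (card V)"
proof -
  let ?n = "real (card V)" and ?m = "alpha_max V k x"
  have "?m \<ge> 0" using alpha_max_nonneg[OF assms(5)] .
  have nonzero: "alpha V x l \<noteq> 0" if "w \<in> V" "x w = Some l" for w l
    using alpha_ge_inverse_card[of V w x l] assms(1) that by (auto simp: card_gt_0_iff)
  have le_max: "3 * alpha V x l / ?n \<le> 3 * ?m / ?n" if "w \<in> V" "x w = Some l" for w l
    using alpha_le_alpha_max[OF valid_config_Some[OF assms(2) that]] by (intro divide_right_mono) auto
  show ?thesis
  proof (cases "x v")
    case None
    then show ?thesis using \<open>?m \<ge> 0\<close> by (simp add: gamma_increment_def)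
  next
    case (Some j)
    show ?thesis
    proof (cases "x u")
      case None
      have "\<bar>gamma_increment V x (x u) (x v)\<bar> = \<bar>2 * alpha V x j / ?n + 1 / ?n\<^sup>2\<bar>"
        using None Some by (simp add: gamma_increment_def)
      also have "\<dots> \<le> 3 * alpha V x j / ?n"
        using abs_gamma_jumps_le(1)[OF assms(1) nonzero[OF assms(4) Some]] .
      finally show ?thesis using le_max[OF assms(4) Some] by linarith
    next
      case (Some i)
      have "\<bar>gamma_increment V x (x u) (x v)\<bar> \<le> \<bar>1 / ?n\<^sup>2 - 2 * alpha V x i / ?n\<bar>"
        using Some \<open>x v = Some j\<close> by (simp add: gamma_increment_def)
      also have "\<dots> \<le> 3 * alpha V x i / ?n"
        using abs_gamma_jumps_le(2)[OF assms(1) nonzero[OF assms(3) Some]] .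
      finally show ?thesis using le_max[OF assms(3) Some] by linarith
    qed
  qed
qed

lemma sum_sq_gamma_increment_le:
  assumes "finite V" "V \<noteq> {}" "valid_config V k x"
  shows "(\<Sum>p\<in>V \<times> V. (gamma_increment V x (x (fst p)) (x (snd p)))\<^sup>2) \<le> 9 * norm3_cubed V k x"
proof -
  let ?n = "real (card V)" and ?a = "alpha V x" and ?B = "beta V k x"
  define g where "g j = 2 * ?a j / ?n + 1 / ?n\<^sup>2" for j
  define h where "h i = 1 / ?n\<^sup>2 - 2 * ?a i / ?n" for i
  define Z where "Z i = 9 * (?a i)^3 / ?n\<^sup>2" for i
  have "?n > 0" using assms by (simp add: card_gt_0_iff)
  have jump_sq: "?a i * (g i)\<^sup>2 \<le> Z i \<and> ?a i * (h i)\<^sup>2 \<le> Z i" for i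
  proof (cases "?a i = 0")
    case True
    then show ?thesis by (simp add: Z_def)
  next
    case False
    have "\<bar>g i\<bar> \<le> \<bar>3 * ?a i / ?n\<bar>" "\<bar>h i\<bar> \<le> \<bar>3 * ?a i / ?n\<bar>"
      using abs_gamma_jumps_le[OF assms(1) False] alpha_nonneg[of V x i]
      unfolding g_def h_def by simp_all
    then have "(g i)\<^sup>2 \<le> (3 * ?a i / ?n)\<^sup>2" "(h i)\<^sup>2 \<le> (3 * ?a i / ?n)\<^sup>2"
      by (simp_all only: abs_le_square_iff)
    moreover have "?a i * (3 * ?a i / ?n)\<^sup>2 = Z i"
      by (simp add: Z_def power2_eq_square power3_eq_cube)
    ultimately show ?thesis
      using mult_left_mono[OF _ alpha_nonneg[of V x i]] by (metis (no_types, lifting))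
  qed
  have term_le: "(1 - ?B) * (?a i * (g i)\<^sup>2) + (?B - ?a i) * (?a i * (h i)\<^sup>2) \<le> Z i"
    if "i \<in> {1..k}" for i
  proof -
    have "(1 - ?B) * (?a i * (g i)\<^sup>2) + (?B - ?a i) * (?a i * (h i)\<^sup>2)
        \<le> (1 - ?B) * Z i + (?B - ?a i) * Z i"
      using jump_sq beta_le_one[OF assms] alpha_le_beta[OF that]
      by (intro add_mono mult_left_mono) auto
    also have "\<dots> = Z i - ?a i * Z i" by (simp add: algebra_simps)
    also have "\<dots> \<le> Z i" using alpha_nonneg[of V x i] by (simp add: Z_def)
    finally show ?thesis .
  qed
  have "(\<Sum>p\<in>V \<times> V. (gamma_increment V x (x (fst p)) (x (snd p)))\<^sup>2) = ?n\<^sup>2 *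
      ((1 - ?B) * (\<Sum>j\<in>{1..k}. ?a j * (g j)\<^sup>2) + (\<Sum>i\<in>{1..k}. ?a i * (?B - ?a i) * (h i)\<^sup>2))"
    by (rule sum_pairs_opinion_fun[OF assms]) (auto simp: gamma_increment_def g_def h_def)
  also have "\<dots> = ?n\<^sup>2 *
      (\<Sum>i\<in>{1..k}. (1 - ?B) * (?a i * (g i)\<^sup>2) + (?B - ?a i) * (?a i * (h i)\<^sup>2))"
    by (simp add: sum.distrib sum_distrib_left mult_ac)
  also have "\<dots> \<le> ?n\<^sup>2 * (\<Sum>i\<in>{1..k}. Z i)"
    using term_le by (intro mult_left_mono sum_mono) auto
  also have "\<dots> = 9 * norm3_cubed V k x"
    using \<open>?n > 0\<close>
    by (simp add: Z_def norm3_cubed_def sum_distrib_left[symmetric] sum_divide_distrib[symmetric])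
  finally show ?thesis .
qed

lemma variance_gamma_usd_next_le:
  assumes "finite V" "V \<noteq> {}" "valid_config V k x"
  shows "measure_pmf.variance (usd_next V x) (gamma V k)
           \<le> 9 * norm3_cubed V k x / (real (card V))\<^sup>2"
proof -
  have "finite (set_pmf (usd_next V x))" using assms by (simp add: set_pmf_usd_next)
  then have "measure_pmf.variance (usd_next V x) (gamma V k)
      \<le> measure_pmf.expectation (usd_next V x) (\<lambda>y. (gamma V k y - gamma V k x)\<^sup>2)"
    by (intro measure_pmf.variance_le_expectation_sq_diff integrable_measure_pmf_finite)
  also have "\<dots> = (\<Sum>p\<in>V \<times> V. (gamma_increment V x (x (fst p)) (x (snd p)))\<^sup>2)
                    / (real (card V))\<^sup>2"
    unfolding expectation_usd_next[OF assms(1,2)]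
    by (intro arg_cong[where f = "\<lambda>s. s / _"] sum.cong) (auto simp: gamma_usd_step[OF assms(1,3)])
  also have "\<dots> \<le> 9 * norm3_cubed V k x / (real (card V))\<^sup>2"
    using sum_sq_gamma_increment_le[OF assms] by (simp add: divide_right_mono)
  finally show ?thesis .
qed

lemma abs_gamma_usd_next_sub_expectation_le:
  assumes "finite V" "V \<noteq> {}" "valid_config V k x" "k \<ge> 1"
    and "y \<in> set_pmf (usd_next V x)"
  shows "\<bar>gamma V k y - measure_pmf.expectation (usd_next V x) (gamma V k)\<bar>
           \<le> 6 * alpha_max V k x / real (card V)"
proof -
  let ?c = "3 * alpha_max V k x / real (card V)"
  have step: "\<bar>gamma V k z - gamma V k x\<bar> \<le> ?c" if "z \<in> set_pmf (usd_next V x)" for z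
    using that assms(1-4) abs_gamma_increment_le[OF assms(1,3) _ _ assms(4)]
    by (auto simp: set_pmf_usd_next gamma_usd_step)
  have "finite (set_pmf (usd_next V x))" using assms by (simp add: set_pmf_usd_next)
  then have "\<bar>measure_pmf.expectation (usd_next V x) (gamma V k) - gamma V k x\<bar> \<le> ?c"
    using step by (intro measure_pmf.abs_expectation_sub_le integrable_measure_pmf_finite)
      (auto simp: AE_measure_pmf_iff)
  then show ?thesis using step[OF assms(5)] by linarith
qed

theorem mainTheorem13:
  fixes V :: "'v set" and k :: nat and x :: "'v \<Rightarrow> nat option"
  assumes "finite V" and "V \<noteq> {}" and "k \<ge> 1"
    and "valid_config V k x"
  defines "n \<equiv> real (card V)"
    and "M \<equiv> measure_pmf (usd_next V x)"
  shows "((\<integral>y. gamma V k y \<partial>M) =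
           gamma V k x + 2 / n * ((1 - 2 * beta V k x) * gamma V k x + norm3_cubed V k x)
           + (beta V k x - gamma V k x) / n^2)
         \<and> measure_pmf.variance (usd_next V x) (gamma V k) \<le> 9 * norm3_cubed V k x / n^2
         \<and> bernstein_cond M (\<lambda>y. gamma V k y - (\<integral>z. gamma V k z \<partial>M))
           (8 * alpha_max V k x / n) (9 * norm3_cubed V k x / n^2)"
proof -
  let ?p = "usd_next V x" and ?E = "\<integral>z. gamma V k z \<partial>M"
  have variance: "measure_pmf.variance ?p (gamma V k) \<le> 9 * norm3_cubed V k x / n^2"
    unfolding n_def using variance_gamma_usd_next_le[OF assms(1,2,4)] .
  have "finite (set_pmf ?p)" using assms(1,2) by (simp add: set_pmf_usd_next)
  then have "measure_pmf.expectation ?p (\<lambda>y. gamma V k y - ?E) = 0"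
    by (simp add: M_def integrable_measure_pmf_finite measure_pmf.prob_space)
  moreover have "AE y in ?p. \<bar>gamma V k y - ?E\<bar> \<le> 8 * alpha_max V k x / n"
    using abs_gamma_usd_next_sub_expectation_le[OF assms(1,2,4,3)] alpha_max_nonneg[OF assms(3)]
    by (fastforce simp: AE_measure_pmf_iff M_def n_def intro: order_trans divide_right_mono)
  ultimately have "bernstein_cond M (\<lambda>y. gamma V k y - ?E)
      (8 * alpha_max V k x / n) (9 * norm3_cubed V k x / n^2)"
    unfolding M_def using variance by (intro measure_pmf.bernstein_cond_if_bounded) simp_all
  then show ?thesis
    using expectation_gamma_usd_next[OF assms(1,2,4)] variance by (simp add: M_def n_def)
qed

end
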